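(* Let $L=(L^{(n)})_n$ be a family where each $L^{(n)}$ is a set of labels on $n$ qubits, with the two properties: (1) for all $\ell_1,\ell_2\in L^{(n)}$ we have $\ell_1\ell_2\notin L^{(n)}$; (2) $\lim_{n\to\infty}|L^{(n)}|/n=\infty$. Let $C=(C^{(n)})_n$ be a family of CNOT circuits for the nearest-neighbor connectivity graph such that $C^{(n)}$ generates $L^{(n)}$. Then $\mu(C,L)\geq 1+\gamma$ for some absolute constant $\gamma>0$ (independent of the families $L$ and $C$).
   Context: Qubits are indexed $1,\ldots,n$. $\mathrm{CX}_{i,j}$ ($i\neq j$) denotes the CNOT gate with control $i$ and target $j$. A CNOT circuit is a finite sequence of moments, each a set of CNOT gates acting on pairwise disjoint qubits; $\operatorname{size}(C)$ is its total number of gates. It is for the nearest-neighbor connectivity graph if every gate $\mathrm{CX}_{i,j}$ in it has $|i-j|=1$. A label is a subset of $\{1,\ldots,n\}$; for labels $a,b$, $ab$ denotes their symmetric difference. A label sequence $\ell=(\ell_1,\ldots,\ell_n)$ is acted on from the right: $\ell\,\mathrm{CX}_{i,j}$ replaces $\ell_j$ by $\ell_i\ell_j$; a moment applies its gates and a circuit applies its moments in order. With $C_{1,m}$ the first $m$ moments of $C$, $C$ generates a label set $L$ if every element of $L$ occurs as an entry of $\ell^0 C_{1,m}$ for some $m\geq 1$, where (by the paper's standing convention) the initial sequence is $\ell^0=(\{1\},\ldots,\{n\})$. $\mu(C,L)=\liminf_{n\to\infty}\operatorname{size}(C^{(n)})/|L^{(n)}|$. *)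

theory Defs
  imports Complex_Main "HOL-Library.Extended_Real" "HOL-Library.Liminf_Limsup"
begin

(* Qubits are 1..n.
   A label sequence is a function nat => nat set (only entries 1..n matter).
   A CNOT gate CX_{i,j} is the pair (i,j): control i, target j. *)

type_synonym label = "nat set"
type_synonym gate = "nat \<times> nat"
type_synonym moment = "gate list"
type_synonym circuit = "moment list"

definition symdiff :: "label \<Rightarrow> label \<Rightarrow> label" where
  "symdiff a b = (a - b) \<union> (b - a)"

definition gate_ok :: "nat \<Rightarrow> gate \<Rightarrow> bool" where
  "gate_ok n g \<longleftrightarrow> fst g \<in> {1..n} \<and> snd g \<in> {1..n} \<and> fst g \<noteq> snd g"

definition moment_ok :: "nat \<Rightarrow> moment \<Rightarrow> bool" where
  "moment_ok n M \<longleftrightarrow> (\<forall>g\<in>set M. gate_ok n g) \<and>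
     (\<forall>a<length M. \<forall>b<length M. a \<noteq> b \<longrightarrow>
        {fst (M!a), snd (M!a)} \<inter> {fst (M!b), snd (M!b)} = {})"

definition cnot_circuit :: "nat \<Rightarrow> circuit \<Rightarrow> bool" where
  "cnot_circuit n C \<longleftrightarrow> (\<forall>M\<in>set C. moment_ok n M)"

definition nearest_neighbor :: "circuit \<Rightarrow> bool" where
  "nearest_neighbor C \<longleftrightarrow>
     (\<forall>M\<in>set C. \<forall>g\<in>set M. fst g = snd g + 1 \<or> snd g = fst g + 1)"

definition circ_size :: "circuit \<Rightarrow> nat" where
  "circ_size C = sum_list (map length C)"

(* l CX_{i,j}: replaces l_j by l_i l_j *)
definition apply_gate :: "gate \<Rightarrow> (nat \<Rightarrow> label) \<Rightarrow> (nat \<Rightarrow> label)" where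
  "apply_gate g l = l(snd g := symdiff (l (fst g)) (l (snd g)))"

(* gates of a moment act on disjoint qubits, so the order is irrelevant *)
definition apply_moment :: "moment \<Rightarrow> (nat \<Rightarrow> label) \<Rightarrow> (nat \<Rightarrow> label)" where
  "apply_moment M l = fold apply_gate M l"

definition init_labels :: "nat \<Rightarrow> label" where
  "init_labels k = {k}"

definition run_prefix :: "circuit \<Rightarrow> nat \<Rightarrow> (nat \<Rightarrow> label)" where
  "run_prefix C m = fold apply_moment (take m C) init_labels"

definition generates :: "nat \<Rightarrow> circuit \<Rightarrow> label set \<Rightarrow> bool" where
  "generates n C L \<longleftrightarrow>
     (\<forall>a\<in>L. \<exists>m. 1 \<le> m \<and> m \<le> length C \<and> (\<exists>k\<in>{1..n}. run_prefix C m k = a))"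

definition mu :: "(nat \<Rightarrow> circuit) \<Rightarrow> (nat \<Rightarrow> label set) \<Rightarrow> ereal" where
  "mu C L = liminf (\<lambda>n. ereal (real (circ_size (C n)) / real (card (L n))))"

end

theory Submission
  imports Defs
begin

text \<open>
  Flatten the circuit into its gate sequence and call a gate productive if it writes a label of
  L that has not occurred before. Every label of L is an initial singleton or is written by a
  productive gate, so |L| <= n + #productive. A productive gate is filling if the label it
  overwrites lies outside L and replacing otherwise. Filling gates decrease the number of qubits
  holding labels outside L, which only unproductive gates increase, so
  #filling <= n + #unproductive.

  Replacing gates are where the line matters: the controls of the gates targeting qubit j are
  j - 1 and j + 1. Let q, r be consecutive gates on j with r replacing. Unless an unproductive gate
  acts on a neighbour of j in between, the control label of r is the same as at time q (its last
  writer would have produced a label outside L, because L is symdiff-free), and then equal controls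
  would make r rewrite the old label of j. Hence among four consecutive gates on j ending with
  three replacing ones and no such unproductive gate the controls alternate, and the labels
  telescope so that the last gate writes a label seen before. Charging every replacing gate to a
  nearby unproductive or filling gate gives #replacing <= 3 n + 9 (#unproductive + #filling), and
  together 20 |L| <= 33 n + 19 size(C); since |L| / n tends to infinity, any
  \<gamma> < 1/19 works.
\<close>

lemma symdiff_cancel_left [simp]: "symdiff a (symdiff a b) = b"
  unfolding symdiff_def by auto

lemma symdiff_left_commute_cancel [simp]: "symdiff a (symdiff b (symdiff a x)) = symdiff b x"
  unfolding symdiff_def by auto

definition symdiff_free :: "label set \<Rightarrow> bool" where
  "symdiff_free L \<longleftrightarrow> (\<forall>l1\<in>L. \<forall>l2\<in>L. symdiff l1 l2 \<notin> L)"

definition adjacent :: "nat \<Rightarrow> nat \<Rightarrow> bool" where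
  "adjacent x y \<longleftrightarrow> x = y + 1 \<or> y = x + 1"

lemma adjacent_sym: "adjacent x y \<longleftrightarrow> adjacent y x"
  unfolding adjacent_def by auto

lemma adjacent_imp_neq: "adjacent x y \<Longrightarrow> x \<noteq> y"
  unfolding adjacent_def by auto

lemma adjacent_two_neighbours:
  "adjacent x j \<Longrightarrow> adjacent y j \<Longrightarrow> adjacent z j \<Longrightarrow> x \<noteq> y \<Longrightarrow> y \<noteq> z \<Longrightarrow> x = z"
  unfolding adjacent_def by auto

lemma card_few_predecessors:
  fixes T :: "'a::linorder set"
  assumes "finite T"
  shows "card {t\<in>T. card {s\<in>T. s < t} < k} \<le> k"
proof -
  define rank where "rank t = card {s\<in>T. s < t}" for t
  have "inj_on rank T"
  proof (rule linorder_inj_onI)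
    fix x y assume "x < y" "x \<in> T" "y \<in> T"
    then have "{s\<in>T. s < x} \<subset> {s\<in>T. s < y}" by auto
    then have "rank x < rank y"
      unfolding rank_def by (rule psubset_card_mono[rotated]) (use assms in simp)
    then show "rank x \<noteq> rank y" by simp
  qed auto
  then have "card {t\<in>T. rank t < k} = card (rank ` {t\<in>T. rank t < k})"
    by (intro card_image[symmetric]) (auto intro: inj_on_subset)
  also have "\<dots> \<le> card {..<k}" by (intro card_mono) auto
  finally show ?thesis unfolding rank_def by simp
qed

lemma obtain_three_largest:
  fixes S :: "'a::linorder set"
  assumes "finite S" and "3 \<le> card S"
  obtains a b c where "a \<in> S" "b \<in> S" "c \<in> S" "a < b" "b < c"
    and "\<And>s. s \<in> S \<Longrightarrow> a < s \<Longrightarrow> s = b \<or> s = c"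
proof -
  define c where "c = Max S"
  define b where "b = Max (S - {c})"
  define a where "a = Max (S - {c, b})"
  have "S - {c, b} \<noteq> {}"
  proof
    assume "S - {c, b} = {}"
    then have "card S \<le> card {c, b}" by (intro card_mono) auto
    also have "\<dots> \<le> 2" by (simp add: card_insert_if)
    finally show False using assms(2) by simp
  qed
  then have a: "a \<in> S - {c, b}" and b: "b \<in> S - {c}" and c: "c \<in> S"
    unfolding a_def b_def c_def using assms(1) by (auto intro!: Max_in simp del: Diff_iff)
  have "a \<le> b" "b \<le> c"
    using a b assms(1) unfolding b_def c_def by (auto intro!: Max_ge)
  moreover have "s \<le> a" if "s \<in> S - {c, b}" for s
    using that assms(1) unfolding a_def by (auto intro!: Max_ge)
  ultimately show thesis
    using that[of a b c] a b c by fastforce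
qed

locale line_gate_sequence =
  fixes n :: nat and gs :: "gate list"
  assumes target_in_range: "g \<in> set gs \<Longrightarrow> snd g \<in> {1..n}"
    and gate_adjacent: "g \<in> set gs \<Longrightarrow> adjacent (fst g) (snd g)"
begin

definition labels :: "nat \<Rightarrow> nat \<Rightarrow> label" where
  "labels t = fold apply_gate (take t gs) init_labels"

definition ctrl :: "nat \<Rightarrow> nat" where
  "ctrl t = fst (gs ! t)"

definition tgt :: "nat \<Rightarrow> nat" where
  "tgt t = snd (gs ! t)"

definition new_label :: "nat \<Rightarrow> label" where
  "new_label t = symdiff (labels t (ctrl t)) (labels t (tgt t))"

definition seen :: "nat \<Rightarrow> label set" where
  "seen t = {labels s w | s w. s \<le> t}"

definition gates_on :: "nat \<Rightarrow> nat \<Rightarrow> nat set" where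
  "gates_on lo j = {s. lo \<le> s \<and> s < length gs \<and> tgt s = j}"

lemma labels_Suc: "t < length gs \<Longrightarrow> labels (Suc t) = (labels t)(tgt t := new_label t)"
  unfolding labels_def new_label_def ctrl_def tgt_def
  by (simp add: take_Suc_conv_app_nth apply_gate_def)

lemma labels_final: "length gs \<le> t \<Longrightarrow> labels t = labels (length gs)"
  unfolding labels_def by simp

lemma tgt_in_range: "t < length gs \<Longrightarrow> tgt t \<in> {1..n}"
  using target_in_range nth_mem unfolding tgt_def by blast

lemma ctrl_adjacent_tgt: "t < length gs \<Longrightarrow> adjacent (ctrl t) (tgt t)"
  using gate_adjacent nth_mem unfolding ctrl_def tgt_def by blast

lemma changed_label_written:
  assumes "q \<le> r" "r \<le> length gs" "labels r w \<noteq> labels q w"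
  shows "\<exists>s. q \<le> s \<and> s < r \<and> tgt s = w \<and> new_label s = labels r w"
  using assms
proof (induction r)
  case 0
  then show ?case by simp
next
  case (Suc r)
  show ?case
  proof (cases "q = Suc r")
    case True
    then show ?thesis using Suc.prems by simp
  next
    case False
    then have "q \<le> r" "r < length gs" using Suc.prems by auto
    show ?thesis
    proof (cases "tgt r = w")
      case True
      then show ?thesis using \<open>q \<le> r\<close> labels_Suc[OF \<open>r < length gs\<close>] by auto
    next
      case False
      then have "labels (Suc r) w = labels r w" using labels_Suc[OF \<open>r < length gs\<close>] by simp
      then show ?thesis using Suc \<open>q \<le> r\<close> \<open>r < length gs\<close> by (metis less_Suc_eq less_imp_le)
    qed
  qed
qed

lemma labels_unchanged:
  "q \<le> r \<Longrightarrow> r \<le> length gs \<Longrightarrow> (\<And>s. q \<le> s \<Longrightarrow> s < r \<Longrightarrow> tgt s \<noteq> w) \<Longrightarrow>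
    labels r w = labels q w"
  using changed_label_written by blast

lemma new_label_after_alternating_controls:
  assumes order: "p3 < p2" "p2 < p1" "p1 < t" "t < length gs"
    and on_j: "tgt p3 = j" "tgt p2 = j" "tgt p1 = j" "tgt t = j"
    and consecutive: "\<And>s. p3 < s \<Longrightarrow> s < t \<Longrightarrow> tgt s = j \<Longrightarrow> s = p2 \<or> s = p1"
    and ctrls: "ctrl p3 = ctrl p1" "ctrl p2 = ctrl t"
    and stable: "labels p1 (ctrl p1) = labels p3 (ctrl p1)" "labels t (ctrl t) = labels p2 (ctrl t)"
  shows "new_label t = labels p3 j"
proof -
  have after: "labels r j = new_label q"
    if q: "p3 \<le> q" "q < r" "r \<le> t" "tgt q = j"
      and gap: "\<And>s. q < s \<Longrightarrow> s < r \<Longrightarrow> s \<noteq> p2 \<and> s \<noteq> p1" for q r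
  proof -
    have "labels r j = labels (Suc q) j"
    proof (rule labels_unchanged)
      show "tgt s \<noteq> j" if "Suc q \<le> s" "s < r" for s
        using consecutive[of s] gap[of s] that q by auto
    qed (use q order in auto)
    also have "\<dots> = new_label q"
      using labels_Suc[of q] q order by simp
    finally show ?thesis .
  qed
  have "labels t j = new_label p1" by (rule after) (use order on_j in auto)
  moreover have "labels p1 j = new_label p2" by (rule after) (use order on_j in auto)
  moreover have "labels p2 j = new_label p3" by (rule after) (use order on_j in auto)
  ultimately show ?thesis
    using on_j ctrls stable unfolding new_label_def by simp
qed

lemma card_few_earlier_on_targets:
  assumes "finite J"
  shows "card {t \<in> (\<Union>j\<in>J. gates_on lo j). card {s \<in> gates_on lo (tgt t). s < t} < k} \<le> k * card J"
proof -
  have "{t \<in> (\<Union>j\<in>J. gates_on lo j). card {s \<in> gates_on lo (tgt t). s < t} < k}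
      = (\<Union>j\<in>J. {t \<in> gates_on lo j. card {s \<in> gates_on lo j. s < t} < k})"
    by (auto simp: gates_on_def)
  then have "card {t \<in> (\<Union>j\<in>J. gates_on lo j). card {s \<in> gates_on lo (tgt t). s < t} < k}
      \<le> (\<Sum>j\<in>J. card {t \<in> gates_on lo j. card {s \<in> gates_on lo j. s < t} < k})"
    using card_UN_le[OF assms] by simp
  also have "\<dots> \<le> (\<Sum>j\<in>J. k)"
    by (intro sum_mono card_few_predecessors) (simp add: gates_on_def)
  finally show ?thesis by (simp add: mult.commute)
qed

definition charge_window :: "nat \<Rightarrow> nat set" where
  "charge_window h = {t. h < t \<and> t < length gs \<and> (tgt t = tgt h \<or> adjacent (tgt t) (tgt h)) \<and>
     card {s \<in> gates_on (Suc h) (tgt t). s < t} < 3}"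

lemma card_charge_window: "card (charge_window h) \<le> 9"
proof -
  define J where "J = {tgt h - 1, tgt h, tgt h + 1}"
  have "charge_window h \<subseteq>
      {t \<in> (\<Union>j\<in>J. gates_on (Suc h) j). card {s \<in> gates_on (Suc h) (tgt t). s < t} < 3}"
    unfolding charge_window_def J_def gates_on_def adjacent_def by auto
  moreover have "finite {t \<in> (\<Union>j\<in>J. gates_on (Suc h) j). card {s \<in> gates_on (Suc h) (tgt t). s < t} < 3}"
    by (rule finite_subset[of _ "{..<length gs}"]) (auto simp: gates_on_def)
  ultimately have "card (charge_window h) \<le> 3 * card J"
    using card_few_earlier_on_targets[of J "Suc h" 3] card_mono[of _ "charge_window h"]
    unfolding J_def by (meson finite.emptyI finite.insertI le_trans)
  also have "card J \<le> 3"
    unfolding J_def by (simp add: card_insert_if)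
  finally show ?thesis by simp
qed

lemma charge_windowI:
  assumes "t < length gs" "p3 < h" "h < t" "tgt h = tgt t \<or> adjacent (tgt t) (tgt h)"
    and consecutive: "\<And>s. p3 < s \<Longrightarrow> s < t \<Longrightarrow> tgt s = tgt t \<Longrightarrow> s = p2 \<or> s = p1"
  shows "t \<in> charge_window h"
proof -
  have "{s \<in> gates_on (Suc h) (tgt t). s < t} \<subseteq> {p2, p1}"
  proof
    fix s assume "s \<in> {s \<in> gates_on (Suc h) (tgt t). s < t}"
    then have "p3 < s" "s < t" "tgt s = tgt t"
      using \<open>p3 < h\<close> unfolding gates_on_def by auto
    then show "s \<in> {p2, p1}" using consecutive by blast
  qed
  then have "card {s \<in> gates_on (Suc h) (tgt t). s < t} \<le> card {p2, p1}"
    by (rule card_mono[rotated]) simp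
  also have "\<dots> \<le> 2" by (simp add: card_insert_if)
  finally show ?thesis
    using assms adjacent_sym unfolding charge_window_def by auto
qed

lemma obtain_three_previous_gates:
  assumes "t < length gs" "3 \<le> card {s \<in> gates_on 0 (tgt t). s < t}"
  obtains p3 p2 p1 where "p3 < p2" "p2 < p1" "p1 < t"
    and "tgt p3 = tgt t" "tgt p2 = tgt t" "tgt p1 = tgt t"
    and "\<And>s. p3 < s \<Longrightarrow> s < t \<Longrightarrow> tgt s = tgt t \<Longrightarrow> s = p2 \<or> s = p1"
proof -
  define earlier where "earlier = {s \<in> gates_on 0 (tgt t). s < t}"
  have "finite earlier" unfolding earlier_def gates_on_def by simp
  then obtain p3 p2 p1 where "p3 \<in> earlier" "p2 \<in> earlier" "p1 \<in> earlier" "p3 < p2" "p2 < p1"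
    and last3: "\<And>s. s \<in> earlier \<Longrightarrow> p3 < s \<Longrightarrow> s = p2 \<or> s = p1"
    using assms(2) unfolding earlier_def[symmetric] by (rule obtain_three_largest) blast
  moreover have "s \<in> earlier" if "s < t" "tgt s = tgt t" for s
    using that assms(1) unfolding earlier_def gates_on_def by auto
  ultimately show thesis
    using that[of p3 p2 p1] unfolding earlier_def gates_on_def by auto
qed

end

locale symdiff_free_generation = line_gate_sequence +
  fixes L :: "label set"
  assumes L_symdiff_free: "symdiff_free L"
begin

definition productive :: "nat set" where
  "productive = {t. t < length gs \<and> new_label t \<in> L \<and> new_label t \<notin> seen t}"

definition unproductive :: "nat set" where
  "unproductive = {..<length gs} - productive"

definition filling :: "nat set" where
  "filling = {t \<in> productive. labels t (tgt t) \<notin> L}"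

definition replacing :: "nat set" where
  "replacing = {t \<in> productive. labels t (tgt t) \<in> L}"

definition no_unproductive_beside :: "nat \<Rightarrow> nat \<Rightarrow> bool" where
  "no_unproductive_beside q r \<longleftrightarrow>
     (\<forall>s. q < s \<longrightarrow> s < r \<longrightarrow> adjacent (tgt r) (tgt s) \<longrightarrow> s \<notin> unproductive)"

lemma replacing_control_label_stable:
  assumes r: "r \<in> replacing" and "q \<le> r" "tgt q = tgt r" "no_unproductive_beside q r"
  shows "labels r (ctrl r) = labels q (ctrl r)"
proof (rule ccontr)
  assume changed: "labels r (ctrl r) \<noteq> labels q (ctrl r)"
  have "r < length gs" "new_label r \<in> L" "labels r (tgt r) \<in> L"
    using r unfolding replacing_def productive_def by auto
  then have not_L: "labels r (ctrl r) \<notin> L"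
    using L_symdiff_free unfolding symdiff_free_def new_label_def by (metis symdiff_cancel_left)
  obtain s where s: "q \<le> s" "s < r" "tgt s = ctrl r" "new_label s = labels r (ctrl r)"
    using changed_label_written[OF \<open>q \<le> r\<close> _ changed] \<open>r < length gs\<close> by auto
  have "adjacent (tgt r) (tgt s)"
    using s(3) ctrl_adjacent_tgt[OF \<open>r < length gs\<close>] adjacent_sym by simp
  moreover have "s \<noteq> q"
    using s(3) \<open>tgt q = tgt r\<close> adjacent_imp_neq[OF ctrl_adjacent_tgt[OF \<open>r < length gs\<close>]] by auto
  moreover have "s \<in> unproductive"
    using s not_L \<open>r < length gs\<close> unfolding unproductive_def productive_def by auto
  ultimately show False
    using \<open>no_unproductive_beside q r\<close> s unfolding no_unproductive_beside_def by auto
qed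

lemma replacing_control_alternates:
  assumes r: "r \<in> replacing" and "q < r" "tgt q = tgt r" "no_unproductive_beside q r"
    and no_gate_between: "\<And>s. q < s \<Longrightarrow> s < r \<Longrightarrow> tgt s \<noteq> tgt r"
  shows "ctrl q \<noteq> ctrl r"
proof
  assume same_ctrl: "ctrl q = ctrl r"
  have "r < length gs" and unseen: "new_label r \<notin> seen r"
    using r unfolding replacing_def productive_def by auto
  have "labels r (tgt r) = labels (Suc q) (tgt r)"
  proof (rule labels_unchanged)
    show "tgt s \<noteq> tgt r" if "Suc q \<le> s" "s < r" for s
      using no_gate_between that by simp
  qed (use \<open>q < r\<close> \<open>r < length gs\<close> in auto)
  also have "\<dots> = new_label q"
    using \<open>q < r\<close> \<open>r < length gs\<close> \<open>tgt q = tgt r\<close> by (simp add: labels_Suc)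
  finally have tgt_label: "labels r (tgt r) = new_label q" .
  have "labels r (ctrl r) = labels q (ctrl r)"
    using replacing_control_label_stable assms less_imp_le by blast
  then have ctrl_label: "labels r (ctrl r) = labels q (ctrl q)"
    using same_ctrl by simp
  have "new_label r = labels q (tgt q)"
    unfolding new_label_def tgt_label ctrl_label by (simp add: new_label_def)
  moreover have "labels q (tgt q) \<in> seen r"
    using \<open>q < r\<close> unfolding seen_def by auto
  ultimately show False using unseen by simp
qed

lemma replacing_run_has_unproductive_neighbour:
  assumes t: "t \<in> replacing" and p1: "p1 \<in> replacing" and p2: "p2 \<in> replacing"
    and order: "p3 < p2" "p2 < p1" "p1 < t"
    and on_j: "tgt p3 = j" "tgt p2 = j" "tgt p1 = j" "tgt t = j"
    and consecutive: "\<And>s. p3 < s \<Longrightarrow> s < t \<Longrightarrow> tgt s = j \<Longrightarrow> s = p2 \<or> s = p1"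
  obtains s where "p3 < s" "s < t" "s \<in> unproductive" "adjacent j (tgt s)"
proof (rule ccontr)
  note found = that
  assume "\<not> thesis"
  have beside: "no_unproductive_beside q r" if "p3 \<le> q" "r \<le> t" "tgt r = j" for q r
    unfolding no_unproductive_beside_def
  proof (intro allI impI)
    fix s assume "q < s" "s < r" "adjacent (tgt r) (tgt s)"
    then show "s \<notin> unproductive"
      using found[of s] \<open>\<not> thesis\<close> that by auto
  qed
  have "t < length gs" using t unfolding replacing_def productive_def by auto
  have gap32: "tgt s \<noteq> tgt p2" if "p3 < s" "s < p2" for s
    using consecutive[of s] that order on_j by auto
  have gap21: "tgt s \<noteq> tgt p1" if "p2 < s" "s < p1" for s
    using consecutive[of s] that order on_j by auto
  have gap1t: "tgt s \<noteq> tgt t" if "p1 < s" "s < t" for s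
    using consecutive[of s] that order on_j by auto
  have ne32: "ctrl p3 \<noteq> ctrl p2"
    using replacing_control_alternates[OF p2 order(1) _ beside[of p3 p2] gap32] order on_j by simp
  have ne21: "ctrl p2 \<noteq> ctrl p1"
    using replacing_control_alternates[OF p1 order(2) _ beside[of p2 p1] gap21] order on_j by simp
  have ne1t: "ctrl p1 \<noteq> ctrl t"
    using replacing_control_alternates[OF t order(3) _ beside[of p1 t] gap1t] order on_j by simp
  have adj: "adjacent (ctrl s) j" if "s \<le> t" "tgt s = j" for s
    using that ctrl_adjacent_tgt[of s] \<open>t < length gs\<close> by auto
  have ctrl31: "ctrl p3 = ctrl p1"
    using adjacent_two_neighbours[OF adj adj adj ne32 ne21] order on_j by simp
  have ctrl2t: "ctrl p2 = ctrl t"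
    using adjacent_two_neighbours[OF adj adj adj ne21 ne1t] order on_j by simp
  have "labels p1 (ctrl p1) = labels p3 (ctrl p1)"
    using replacing_control_label_stable[OF p1 _ _ beside[of p3 p1]] order on_j by simp
  moreover have "labels t (ctrl t) = labels p2 (ctrl t)"
    using replacing_control_label_stable[OF t _ _ beside[of p2 t]] order on_j by simp
  ultimately have "new_label t = labels p3 j"
    using new_label_after_alternating_controls[OF order \<open>t < length gs\<close> on_j consecutive
        ctrl31 ctrl2t] by blast
  moreover have "labels p3 j \<in> seen t"
    using order unfolding seen_def by auto
  ultimately show False
    using t unfolding replacing_def productive_def by auto
qed

lemma gate_trichotomy:
  "t < length gs \<Longrightarrow> t \<in> unproductive \<or> t \<in> filling \<or> t \<in> replacing"
  unfolding unproductive_def filling_def replacing_def by auto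

definition early_replacing :: "nat set" where
  "early_replacing = {t \<in> replacing. card {s \<in> gates_on 0 (tgt t). s < t} < 3}"

lemma card_early_replacing: "card early_replacing \<le> 3 * n"
proof -
  have "early_replacing \<subseteq>
      {t \<in> (\<Union>j\<in>{1..n}. gates_on 0 j). card {s \<in> gates_on 0 (tgt t). s < t} < 3}"
    using tgt_in_range unfolding early_replacing_def replacing_def productive_def gates_on_def by auto
  moreover have "finite {t \<in> (\<Union>j\<in>{1..n}. gates_on 0 j). card {s \<in> gates_on 0 (tgt t). s < t} < 3}"
    by (rule finite_subset[of _ "{..<length gs}"]) (auto simp: gates_on_def)
  ultimately have "card early_replacing \<le> 3 * card {1..n}"
    using card_few_earlier_on_targets[of "{1..n}" 0 3] card_mono order_trans by blast
  then show ?thesis by simp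
qed

lemma replacing_charged:
  assumes t: "t \<in> replacing" and "t \<notin> early_replacing"
  obtains h where "h \<in> unproductive \<union> filling" "t \<in> charge_window h"
proof -
  have "t < length gs" using t unfolding replacing_def productive_def by auto
  moreover have "3 \<le> card {s \<in> gates_on 0 (tgt t). s < t}"
    using assms unfolding early_replacing_def by auto
  ultimately obtain p3 p2 p1 where order: "p3 < p2" "p2 < p1" "p1 < t"
    and on_tgt: "tgt p3 = tgt t" "tgt p2 = tgt t" "tgt p1 = tgt t"
    and consecutive: "\<And>s. p3 < s \<Longrightarrow> s < t \<Longrightarrow> tgt s = tgt t \<Longrightarrow> s = p2 \<or> s = p1"
    by (rule obtain_three_previous_gates) blast
  have window: "t \<in> charge_window h"
    if "p3 < h" "h < t" "tgt h = tgt t \<or> adjacent (tgt t) (tgt h)" for h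
    using charge_windowI[OF \<open>t < length gs\<close> that consecutive] .
  consider "p1 \<notin> replacing" | "p2 \<notin> replacing" | "p1 \<in> replacing" "p2 \<in> replacing"
    by blast
  then show thesis
  proof cases
    case 1
    then have "p1 \<in> unproductive \<union> filling"
      using gate_trichotomy[of p1] order \<open>t < length gs\<close> by auto
    then show thesis using that window on_tgt order by auto
  next
    case 2
    then have "p2 \<in> unproductive \<union> filling"
      using gate_trichotomy[of p2] order \<open>t < length gs\<close> by auto
    then show thesis using that window on_tgt order by auto
  next
    case 3
    obtain h where "p3 < h" "h < t" "h \<in> unproductive" "adjacent (tgt t) (tgt h)"
      using replacing_run_has_unproductive_neighbour[OF t 3 order on_tgt refl consecutive] .
    then show thesis using that window by blast
  qed
qed

lemma card_replacing: "card replacing \<le> 3 * n + 9 * card unproductive + 9 * card filling"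
proof -
  define charged where "charged = (\<Union>h \<in> unproductive \<union> filling. charge_window h)"
  have fin: "finite (unproductive \<union> filling)"
    unfolding unproductive_def filling_def productive_def by auto
  have "card charged \<le> (\<Sum>h \<in> unproductive \<union> filling. card (charge_window h))"
    unfolding charged_def by (rule card_UN_le[OF fin])
  also have "\<dots> \<le> (\<Sum>h \<in> unproductive \<union> filling. 9)"
    by (intro sum_mono card_charge_window)
  also have "\<dots> \<le> 9 * (card unproductive + card filling)"
    using card_Un_le[of unproductive filling] by simp
  finally have card_charged: "card charged \<le> 9 * card unproductive + 9 * card filling"
    by simp
  have "replacing \<subseteq> early_replacing \<union> charged"
    unfolding charged_def using replacing_charged by blast
  moreover have "finite (early_replacing \<union> charged)"
    using fin unfolding charged_def early_replacing_def replacing_def productive_def charge_window_def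
    by auto
  ultimately have "card replacing \<le> card early_replacing + card charged"
    by (meson card_Un_le card_mono order_trans)
  then show ?thesis using card_early_replacing card_charged by linarith
qed

definition non_L_qubits :: "nat \<Rightarrow> nat set" where
  "non_L_qubits t = {w \<in> {1..n}. labels t w \<notin> L}"

lemma card_non_L_qubits_Suc:
  assumes "t < length gs"
  shows "card (non_L_qubits (Suc t)) + of_bool (t \<in> filling)
    \<le> card (non_L_qubits t) + of_bool (t \<in> unproductive)"
proof -
  have fin: "finite (non_L_qubits t)" unfolding non_L_qubits_def by simp
  have step: "non_L_qubits (Suc t) = (if new_label t \<in> L then non_L_qubits t - {tgt t}
      else insert (tgt t) (non_L_qubits t))"
    using labels_Suc[OF assms] tgt_in_range[OF assms] unfolding non_L_qubits_def by auto
  have at_most_one_more: "card (non_L_qubits (Suc t)) \<le> card (non_L_qubits t) + 1"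
    unfolding step using fin by (simp add: card_insert_if card_Diff1_le le_SucI)
  consider "t \<in> unproductive" | "t \<in> filling" | "t \<in> replacing"
    using gate_trichotomy[OF assms] by blast
  then show ?thesis
  proof cases
    case 1
    then show ?thesis
      using at_most_one_more unfolding filling_def unproductive_def by auto
  next
    case 2
    then have "new_label t \<in> L" "tgt t \<in> non_L_qubits t" "t \<notin> unproductive"
      using tgt_in_range[OF assms]
      unfolding filling_def productive_def non_L_qubits_def unproductive_def by auto
    moreover from this have "0 < card (non_L_qubits t)"
      using fin card_gt_0_iff by blast
    ultimately show ?thesis
      unfolding step using fin 2 by (simp add: card_Diff_singleton)
  next
    case 3
    then have "new_label t \<in> L" "t \<notin> unproductive" "t \<notin> filling"
      unfolding replacing_def filling_def productive_def unproductive_def by auto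
    then show ?thesis
      unfolding step using fin by (simp add: card_Diff1_le)
  qed
qed

lemma card_filling: "card filling \<le> n + card unproductive"
proof -
  have potential: "card (non_L_qubits N) + card (filling \<inter> {..<N})
      \<le> card (non_L_qubits 0) + card (unproductive \<inter> {..<N})" if "N \<le> length gs" for N
    using that
  proof (induction N)
    case (Suc N)
    then show ?case
      using card_non_L_qubits_Suc[of N]
      by (cases "N \<in> filling"; cases "N \<in> unproductive")
        (simp_all add: lessThan_Suc Int_insert_right card_insert_if)
  qed simp
  have "filling \<inter> {..<length gs} = filling" "unproductive \<inter> {..<length gs} = unproductive"
    unfolding filling_def productive_def unproductive_def by auto
  moreover have "card (non_L_qubits 0) \<le> card {1..n}"
    unfolding non_L_qubits_def by (rule card_mono) auto
  ultimately show ?thesis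
    using potential[of "length gs"] by simp
qed

lemma label_origin:
  assumes "a \<in> L" and "labels m k = a"
  shows "a \<in> range init_labels \<or> a \<in> new_label ` productive"
proof -
  define m0 where "m0 = (LEAST m. \<exists>k. labels m k = a)"
  have "\<exists>k. labels m0 k = a"
    unfolding m0_def by (rule LeastI) (use assms in blast)
  then obtain k0 where k0: "labels m0 k0 = a" by blast
  have minimal: "labels m' w \<noteq> a" if "m' < m0" for m' w
    using not_less_Least[OF that[unfolded m0_def]] by blast
  show ?thesis
  proof (cases m0)
    case 0
    then show ?thesis using k0 unfolding labels_def by auto
  next
    case (Suc t)
    have "t < length gs"
    proof (rule ccontr)
      assume "\<not> t < length gs"
      then have "labels (Suc t) = labels t"
        using labels_final[of t] labels_final[of "Suc t"] by simp
      then show False using minimal[of t k0] k0 Suc by simp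
    qed
    have "k0 = tgt t"
    proof (rule ccontr)
      assume "k0 \<noteq> tgt t"
      then have "labels t k0 = a"
        using k0 Suc labels_Suc[OF \<open>t < length gs\<close>] by simp
      then show False using minimal[of t k0] Suc by simp
    qed
    then have "a = new_label t"
      using k0 Suc labels_Suc[OF \<open>t < length gs\<close>] by simp
    moreover have "a \<notin> seen t"
    proof
      assume "a \<in> seen t"
      then obtain s w where "s \<le> t" "labels s w = a"
        unfolding seen_def by blast
      then show False using minimal[of s w] Suc by simp
    qed
    ultimately have "t \<in> productive"
      using \<open>t < length gs\<close> \<open>a \<in> L\<close> unfolding productive_def by simp
    then show ?thesis using \<open>a = new_label t\<close> by blast
  qed
qed

lemma card_L_le:
  assumes "L \<subseteq> Pow {1..n}" and generated: "\<And>a. a \<in> L \<Longrightarrow> \<exists>m k. labels m k = a"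
  shows "card L \<le> n + card productive"
proof -
  have "L \<subseteq> init_labels ` {1..n} \<union> new_label ` productive"
  proof
    fix a assume "a \<in> L"
    then show "a \<in> init_labels ` {1..n} \<union> new_label ` productive"
      using label_origin generated[OF \<open>a \<in> L\<close>] assms(1) unfolding init_labels_def by blast
  qed
  moreover have "finite (init_labels ` {1..n} \<union> new_label ` productive)"
    unfolding productive_def by simp
  ultimately have "card L \<le> card (init_labels ` {1..n} \<union> new_label ` productive)"
    by (rule card_mono[rotated])
  also have "\<dots> \<le> card (init_labels ` {1..n}) + card (new_label ` productive)"
    by (rule card_Un_le)
  also have "\<dots> \<le> n + card productive"
    using card_image_le[of "{1..n}" init_labels] card_image_le[of productive new_label]
    unfolding productive_def by simp
  finally show ?thesis .
qed

lemma card_unproductive_productive: "card unproductive + card productive = length gs"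
proof -
  have sub: "productive \<subseteq> {..<length gs}"
    unfolding productive_def by auto
  have "card productive \<le> length gs"
    using card_mono[OF finite_lessThan sub] by simp
  moreover have "card unproductive = length gs - card productive"
    unfolding unproductive_def using card_Diff_subset[OF finite_subset[OF sub] sub] by simp
  ultimately show ?thesis by simp
qed

lemma card_productive: "card productive = card filling + card replacing"
proof -
  have "productive = filling \<union> replacing" "filling \<inter> replacing = {}"
    unfolding filling_def replacing_def by auto
  moreover have "finite productive" unfolding productive_def by simp
  ultimately show ?thesis by (metis card_Un_disjoint finite_Un)
qed

lemma gate_count_bound:
  assumes "L \<subseteq> Pow {1..n}" and "\<And>a. a \<in> L \<Longrightarrow> \<exists>m k. labels m k = a"
  shows "20 * card L \<le> 33 * n + 19 * length gs"
proof -
  have "card L \<le> n + card productive"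
    by (rule card_L_le[OF assms(1)]) (rule assms(2))
  then show ?thesis
    using card_filling card_replacing card_unproductive_productive card_productive
    by linarith
qed

end

lemma run_prefix_eq_gate_prefix:
  "run_prefix C m = fold apply_gate (take (length (concat (take m C))) (concat C)) init_labels"
proof -
  have "fold apply_moment Ms l = fold apply_gate (concat Ms) l" for Ms l
    by (induction Ms arbitrary: l) (simp_all add: apply_moment_def)
  moreover have "take (length (concat (take m C))) (concat C) = concat (take m C)"
    by (metis append_eq_conv_conj append_take_drop_id concat_append)
  ultimately show ?thesis unfolding run_prefix_def by simp
qed

lemma circuit_size_bound:
  assumes "L \<subseteq> Pow {1..n}" "symdiff_free L"
    and "cnot_circuit n C" "nearest_neighbor C" "generates n C L"
  shows "20 * card L \<le> 33 * n + 19 * circ_size C"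
proof -
  interpret symdiff_free_generation n "concat C" L
  proof
    fix g assume "g \<in> set (concat C)"
    then obtain M where "M \<in> set C" "g \<in> set M" by auto
    then show "snd g \<in> {1..n}" "adjacent (fst g) (snd g)"
      using assms(3,4)
      unfolding cnot_circuit_def moment_ok_def gate_ok_def nearest_neighbor_def adjacent_def
      by auto
  qed (rule assms(2))
  have "\<exists>m k. labels m k = a" if "a \<in> L" for a
    using assms(5) that
    unfolding generates_def run_prefix_eq_gate_prefix labels_def by blast
  then have "20 * card L \<le> 33 * n + 19 * length (concat C)"
    using gate_count_bound[OF assms(1)] by blast
  then show ?thesis
    unfolding circ_size_def by (simp add: length_concat)
qed

lemma liminf_ratio_ge_of_linear_bound:
  fixes l s :: "nat \<Rightarrow> real" and a b c :: real
  assumes bound: "\<And>n. l n \<le> a * s n + b * n"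
    and growth: "filterlim (\<lambda>n. l n / n) at_top sequentially"
    and "0 < a" "0 \<le> b" "a * c < 1"
  shows "ereal c \<le> liminf (\<lambda>n. ereal (s n / l n))"
proof (rule Liminf_bounded)
  define K where "K = b / (1 - a * c) + 1"
  have "(1 - a * c) * K = b + (1 - a * c)"
    unfolding K_def using assms(5) by (simp add: distrib_left)
  then have "b \<le> (1 - a * c) * K"
    using assms(5) by linarith
  have "K > 0" unfolding K_def using assms(4,5) by (simp add: add_nonneg_pos)
  show "\<forall>\<^sub>F n in sequentially. ereal c \<le> ereal (s n / l n)"
    using growth unfolding filterlim_at_top
  proof (rule eventually_mono[OF spec[of _ K]])
    fix n assume large: "K \<le> l n / n"
    then have "n > 0" using \<open>K > 0\<close> by (cases "n = 0") auto
    then have "K * n \<le> l n" using large by (simp add: field_simps)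
    moreover have "0 < K * n" using \<open>K > 0\<close> \<open>n > 0\<close> by simp
    ultimately have "l n > 0" by linarith
    have "b * n \<le> (1 - a * c) * (K * n)"
      using \<open>b \<le> (1 - a * c) * K\<close> by (simp add: mult_right_mono mult.assoc[symmetric])
    also have "\<dots> \<le> (1 - a * c) * l n"
      using \<open>K * n \<le> l n\<close> assms(5) by (simp add: mult_left_mono)
    finally have "a * (c * l n) \<le> a * s n"
      using bound[of n] by (simp add: algebra_simps)
    then have "c * l n \<le> s n" using \<open>0 < a\<close> by simp
    then show "ereal c \<le> ereal (s n / l n)" using \<open>l n > 0\<close> by (simp add: field_simps)
  qed
qed

theorem mainTheorem2:
  shows "\<exists>\<gamma>::real. \<gamma> > 0 \<and>
    (\<forall>(L :: nat \<Rightarrow> label set) (C :: nat \<Rightarrow> circuit).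
       (\<forall>n. L n \<subseteq> Pow {1..n}) \<longrightarrow>
       (\<forall>n. \<forall>l1\<in>L n. \<forall>l2\<in>L n. symdiff l1 l2 \<notin> L n) \<longrightarrow>
       filterlim (\<lambda>n. real (card (L n)) / real n) at_top sequentially \<longrightarrow>
       (\<forall>n. cnot_circuit n (C n) \<and> nearest_neighbor (C n) \<and> generates n (C n) (L n)) \<longrightarrow>
       mu C L \<ge> ereal (1 + \<gamma>))"
proof (intro exI[of _ "1/38"] conjI allI impI)
  fix L :: "nat \<Rightarrow> label set" and C :: "nat \<Rightarrow> circuit"
  assume "\<forall>n. L n \<subseteq> Pow {1..n}" and "\<forall>n. \<forall>l1\<in>L n. \<forall>l2\<in>L n. symdiff l1 l2 \<notin> L n"
    and growth: "filterlim (\<lambda>n. real (card (L n)) / real n) at_top sequentially"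
    and "\<forall>n. cnot_circuit n (C n) \<and> nearest_neighbor (C n) \<and> generates n (C n) (L n)"
  then have size_bound: "20 * card (L n) \<le> 33 * n + 19 * circ_size (C n)" for n
    by (intro circuit_size_bound) (auto simp: symdiff_free_def)
  have "real (card (L n)) \<le> 19 / 20 * real (circ_size (C n)) + 33 / 20 * real n" for n
    using of_nat_mono[OF size_bound[of n], where 'a = real] by simp
  then show "ereal (1 + 1/38) \<le> mu C L"
    unfolding mu_def by (rule liminf_ratio_ge_of_linear_bound[OF _ growth]) simp_all
qed simp

end
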